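(* Let $\lambda$ be a nonzero real number. For all integers $m,n\ge0$, \[ \phi_{n+m,\lambda}(x)=\sum_{j=0}^{m}\sum_{k=0}^{n}{m\brace j}_\lambda\binom{n}{k}(j-m\lambda)_{n-k,\lambda}\,x^{j}\,\phi_{k,\lambda}(x) \] as polynomials in $x$; equivalently, the same identity holds with $x$ replaced by the boson creation operator $a^{+}$.
   Context: $(x)_{0,\lambda}=1$ and $(x)_{n,\lambda}=x(x-\lambda)\cdots(x-(n-1)\lambda)$ for $n\ge1$. The degenerate Stirling numbers of the second kind ${n\brace k}_\lambda$ are defined by $(x)_{n,\lambda}=\sum_{k=0}^{n}{n\brace k}_\lambda (x)_k$, with $(x)_k=x(x-1)\cdots(x-k+1)$. The degenerate Bell polynomials are $\phi_{n,\lambda}(x)=\sum_{k=0}^{n}{n\brace k}_\lambda x^{k}$ (equivalently $\sum_{n\ge0}\phi_{n,\lambda}(x)t^n/n!=e^{x((1+\lambda t)^{1/\lambda}-1)}$). *)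

theory Defs
  imports "HOL-Analysis.Analysis" "HOL-Computational_Algebra.Polynomial"
begin

definition deg_fall :: "real \<Rightarrow> real \<Rightarrow> nat \<Rightarrow> real" where
  "deg_fall lam x n = (\<Prod>i<n. x - real i * lam)"

definition fall :: "real \<Rightarrow> nat \<Rightarrow> real" where
  "fall x k = (\<Prod>i<k. x - real i)"

definition deg_stirling2 :: "real \<Rightarrow> nat \<Rightarrow> nat \<Rightarrow> real" where
  "deg_stirling2 lam n =
     (THE S. (\<forall>x. deg_fall lam x n = (\<Sum>k\<le>n. S k * fall x k)) \<and> (\<forall>k>n. S k = 0))"

definition deg_bell :: "real \<Rightarrow> nat \<Rightarrow> real poly" where
  "deg_bell lam n = (\<Sum>k\<le>n. monom (deg_stirling2 lam n k) k)"

end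

theory Submission imports Defs begin

text \<open>Write \<open>D = x d/dx\<close> and \<open>E\<^sub>a q = x q + D q + a q\<close>. The Bell recurrence
  \<open>S(n+1,k) = S(n,k-1) + (k - n\<lambda>) S(n,k)\<close> says \<open>\<phi>\<^sub>n\<^sub>+\<^sub>1 = E\<^bsub>-n\<lambda>\<^esub> \<phi>\<^sub>n\<close>, and
  \<open>E\<^sub>a (x\<^sup>j q) = x\<^sup>j E\<^bsub>a+j\<^esub> q\<close>. Hence applying \<open>E\<close> \<open>n\<close> more times to
  \<open>\<phi>\<^sub>m = \<Sum>\<^sub>j S(m,j) x\<^sup>j\<close> moves the operators past \<open>x\<^sup>j\<close>, where they act on \<open>1\<close>
  with the shift \<open>c = j - m\<lambda>\<close>. The iterates \<open>\<Sum>\<^sub>k (n choose k) (c)\<^bsub>n-k,\<lambda>\<^esub> \<phi>\<^sub>k\<close> of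
  \<open>E\<close> on \<open>1\<close> are obtained from a Pascal-type recurrence.\<close>

lemma fall_Suc: "fall x (Suc k) = fall x k * (x - real k)"
  by (simp add: fall_def)

lemma deg_fall_Suc: "deg_fall lam x (Suc k) = deg_fall lam x k * (x - real k * lam)"
  by (simp add: deg_fall_def)

lemma fall_of_nat_eq_0: "i < k \<Longrightarrow> fall (real i) k = 0"
  unfolding fall_def by (rule prod_zero) auto

lemma fall_of_nat_self_neq_0: "fall (real k) k \<noteq> 0"
  unfolding fall_def by (subst prod_zero_iff) auto

lemma fall_expansion_unique:
  assumes "\<And>x. (\<Sum>i\<le>n. a i * fall x i) = 0" and "k \<le> n"
  shows "a k = 0"
  using \<open>k \<le> n\<close>
proof (induction k rule: less_induct)
  case (less k)
  \<comment> \<open>evaluating at \<open>x = k\<close> kills all terms with \<open>i > k\<close>, and those with \<open>i < k\<close> vanish by induction\<close>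
  have "0 = (\<Sum>i\<le>n. a i * fall (real k) i)" using assms(1) by simp
  also have "\<dots> = (\<Sum>i\<in>{k}. a i * fall (real k) i)"
  proof (rule sum.mono_neutral_right)
    show "\<forall>i\<in>{..n} - {k}. a i * fall (real k) i = 0"
      using less by (auto simp: fall_of_nat_eq_0)
        (metis fall_of_nat_eq_0 linorder_neqE_nat mult_zero_right)
  qed (use less in auto)
  finally show ?case using fall_of_nat_self_neq_0[of k] by simp
qed

fun deg_stirling2_rec :: "real \<Rightarrow> nat \<Rightarrow> nat \<Rightarrow> real" where
  "deg_stirling2_rec lam 0 k = (if k = 0 then 1 else 0)"
| "deg_stirling2_rec lam (Suc n) k =
     (if k = 0 then 0 else deg_stirling2_rec lam n (k - 1))
     + (real k - real n * lam) * deg_stirling2_rec lam n k"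

lemma deg_stirling2_rec_eq_0: "n < k \<Longrightarrow> deg_stirling2_rec lam n k = 0"
  by (induction n arbitrary: k) auto

lemma deg_fall_eq_sum_deg_stirling2_rec:
  "deg_fall lam x n = (\<Sum>k\<le>n. deg_stirling2_rec lam n k * fall x k)"
proof (induction n)
  case 0
  then show ?case by (simp add: deg_fall_def fall_def)
next
  case (Suc n)
  let ?S = "deg_stirling2_rec lam n"
  \<comment> \<open>\<open>x - n\<lambda> = (x - k) + (k - n\<lambda>)\<close>\<close>
  have "deg_fall lam x (Suc n) = (\<Sum>k\<le>n. ?S k * fall x k * (x - real n * lam))"
    by (simp add: deg_fall_Suc Suc sum_distrib_right)
  also have "\<dots> =
      (\<Sum>k\<le>n. ?S k * fall x (Suc k)) + (\<Sum>k\<le>n. (real k - real n * lam) * ?S k * fall x k)"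
    by (simp add: fall_Suc sum.distrib[symmetric] algebra_simps)
  also have "(\<Sum>k\<le>n. (real k - real n * lam) * ?S k * fall x k) =
      (\<Sum>k\<le>Suc n. (real k - real n * lam) * ?S k * fall x k)"
    by (simp add: deg_stirling2_rec_eq_0)
  also have "(\<Sum>k\<le>n. ?S k * fall x (Suc k)) =
      (\<Sum>k\<le>Suc n. (if k = 0 then 0 else ?S (k - 1)) * fall x k)"
    by (subst sum.atMost_Suc_shift) simp
  finally show ?case by (simp add: sum.distrib[symmetric] algebra_simps)
qed

lemma deg_stirling2_eq_rec: "deg_stirling2 lam n = deg_stirling2_rec lam n"
  unfolding deg_stirling2_def
proof (rule the_equality)
  fix S
  assume S: "(\<forall>x. deg_fall lam x n = (\<Sum>k\<le>n. S k * fall x k)) \<and> (\<forall>k>n. S k = 0)"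
  show "S = deg_stirling2_rec lam n"
  proof
    fix k
    have "(\<Sum>i\<le>n. (S i - deg_stirling2_rec lam n i) * fall x i) = 0" for x
      using S deg_fall_eq_sum_deg_stirling2_rec[of lam x n]
      by (simp add: algebra_simps sum_subtractf)
    then have "k \<le> n \<Longrightarrow> S k - deg_stirling2_rec lam n k = 0"
      by (rule fall_expansion_unique)
    then show "S k = deg_stirling2_rec lam n k"
      using S deg_stirling2_rec_eq_0[of n k lam] by (cases "k \<le> n") auto
  qed
qed (use deg_fall_eq_sum_deg_stirling2_rec deg_stirling2_rec_eq_0 in blast)

lemma deg_stirling2_0: "deg_stirling2 lam 0 k = (if k = 0 then 1 else 0)"
  by (simp add: deg_stirling2_eq_rec)

lemma deg_stirling2_Suc:
  "deg_stirling2 lam (Suc n) k =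
     (if k = 0 then 0 else deg_stirling2 lam n (k - 1)) + (real k - real n * lam) * deg_stirling2 lam n k"
  by (simp add: deg_stirling2_eq_rec)

lemma deg_stirling2_eq_0: "n < k \<Longrightarrow> deg_stirling2 lam n k = 0"
  by (simp add: deg_stirling2_eq_rec deg_stirling2_rec_eq_0)

definition euler_shift :: "real \<Rightarrow> real poly \<Rightarrow> real poly" where
  "euler_shift a q = monom 1 1 * q + monom 1 1 * pderiv q + smult a q"

lemma euler_shift_add: "euler_shift a (p + q) = euler_shift a p + euler_shift a q"
  by (simp add: euler_shift_def pderiv_add smult_add_right ring_distribs)

lemma euler_shift_0: "euler_shift a 0 = 0"
  by (simp add: euler_shift_def)

lemma euler_shift_sum: "euler_shift a (\<Sum>k\<in>A. f k) = (\<Sum>k\<in>A. euler_shift a (f k))"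
  by (induction A rule: infinite_finite_induct) (auto simp: euler_shift_add euler_shift_0)

lemma euler_shift_smult: "euler_shift a (smult c q) = smult c (euler_shift a q)"
  by (simp add: euler_shift_def pderiv_smult smult_add_right mult.commute)

lemma monom_mult_pderiv_monom: "monom 1 1 * pderiv (monom (1::real) j) = smult (real j) (monom 1 j)"
  by (rule poly_eqI) (auto simp: coeff_monom_mult coeff_pderiv coeff_monom split: nat.split)

lemma euler_shift_monom_mult:
  "euler_shift a (monom 1 j * q) = monom 1 j * euler_shift (real j + a) q"
proof -
  have "monom 1 1 * pderiv (monom 1 j * q) =
      monom 1 j * (monom 1 1 * pderiv q) + q * (monom 1 1 * pderiv (monom 1 j))"
    by (simp add: pderiv_mult algebra_simps)
  also have "\<dots> = monom 1 j * (monom 1 1 * pderiv q) + smult (real j) (monom 1 j * q)"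
    by (simp only: monom_mult_pderiv_monom) (simp add: ac_simps)
  finally show ?thesis
    by (simp add: euler_shift_def algebra_simps smult_add_left)
qed

lemma coeff_deg_bell: "coeff (deg_bell lam n) i = deg_stirling2 lam n i"
  by (auto simp: deg_bell_def coeff_sum deg_stirling2_eq_0 coeff_monom)

lemma deg_bell_0: "deg_bell lam 0 = 1"
  by (rule poly_eqI) (simp add: coeff_deg_bell deg_stirling2_0 coeff_1)

lemma deg_bell_eq_sum_smult_monom: "deg_bell lam n = (\<Sum>j\<le>n. smult (deg_stirling2 lam n j) (monom 1 j))"
  by (simp add: deg_bell_def smult_monom)

lemma monom_1_1_mult: "monom 1 1 * p = pCons 0 (p :: 'a :: comm_semiring_1 poly)"
  by (rule poly_eqI) (auto simp: coeff_pCons coeff_monom_mult split: nat.split)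

lemma deg_bell_Suc: "deg_bell lam (Suc n) = euler_shift (- (real n * lam)) (deg_bell lam n)"
  unfolding euler_shift_def monom_1_1_mult
  by (rule poly_eqI)
    (auto simp: coeff_deg_bell deg_stirling2_Suc coeff_pderiv coeff_pCons algebra_simps
      split: nat.split)

lemma euler_shift_deg_bell:
  "euler_shift a (deg_bell lam k) = deg_bell lam (Suc k) + smult (a + real k * lam) (deg_bell lam k)"
  by (simp add: deg_bell_Suc euler_shift_def algebra_simps smult_add_left)

text \<open>Exponential generating function \<open>(1 + \<lambda>t)\<^bsup>c/\<lambda>\<^esup> e\<^bsup>x((1+\<lambda>t)\<^bsup>1/\<lambda>\<^esup> - 1)\<^esup>\<close>.\<close>

definition deg_bell_conv :: "real \<Rightarrow> real \<Rightarrow> nat \<Rightarrow> real poly" where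
  "deg_bell_conv lam c n =
     (\<Sum>k\<le>n. smult (real (n choose k) * deg_fall lam c (n - k)) (deg_bell lam k))"

lemma deg_bell_conv_0: "deg_bell_conv lam c 0 = 1"
  by (simp add: deg_bell_conv_def deg_fall_def deg_bell_0)

lemma deg_fall_binomial_convolution_Suc:
  fixes g :: "nat \<Rightarrow> real" and lam c :: real
  defines "d \<equiv> deg_fall lam c"
  shows "(\<Sum>k\<le>n. real (n choose k) * d (n - k) * (g (Suc k) + (c - real (n - k) * lam) * g k))
       = (\<Sum>k\<le>Suc n. real (Suc n choose k) * d (Suc n - k) * g k)"
proof -
  have d_Suc: "d (Suc r) = d r * (c - real r * lam)" for r
    by (simp add: d_def deg_fall_Suc)
  have shifted: "(\<Sum>k\<le>n. real (n choose k) * d (Suc (n - k)) * g k)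
      = d (Suc n) * g 0 + (\<Sum>i\<le>n. real (n choose Suc i) * d (n - i) * g (Suc i))"
  proof -
    have "(\<Sum>k\<le>n. real (n choose k) * d (Suc (n - k)) * g k)
        = (\<Sum>k\<le>Suc n. real (n choose k) * d (Suc (n - k)) * g k)"
      by simp
    also have "\<dots> = d (Suc n) * g 0 + (\<Sum>i\<le>n. real (n choose Suc i) * d (Suc (n - Suc i)) * g (Suc i))"
      by (subst sum.atMost_Suc_shift) simp
    also have "(\<Sum>i\<le>n. real (n choose Suc i) * d (Suc (n - Suc i)) * g (Suc i))
        = (\<Sum>i\<le>n. real (n choose Suc i) * d (n - i) * g (Suc i))"
      by (intro sum.cong refl) (auto simp: Suc_diff_Suc le_less)
    finally show ?thesis .
  qed
  have "(\<Sum>k\<le>n. real (n choose k) * d (n - k) * (g (Suc k) + (c - real (n - k) * lam) * g k))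
      = (\<Sum>k\<le>n. real (n choose k) * d (n - k) * g (Suc k))
        + (\<Sum>k\<le>n. real (n choose k) * d (Suc (n - k)) * g k)"
    by (simp add: d_Suc sum.distrib[symmetric] algebra_simps)
  also have "\<dots> = d (Suc n) * g 0
      + (\<Sum>i\<le>n. (real (n choose i) + real (n choose Suc i)) * d (n - i) * g (Suc i))"
    by (simp add: shifted sum.distrib distrib_right)
  also have "\<dots> = (\<Sum>k\<le>Suc n. real (Suc n choose k) * d (Suc n - k) * g k)"
    by (subst sum.atMost_Suc_shift) simp
  finally show ?thesis .
qed

lemma euler_shift_deg_bell_conv:
  "euler_shift (c - real n * lam) (deg_bell_conv lam c n) = deg_bell_conv lam c (Suc n)"
proof -
  have "euler_shift (c - real n * lam) (deg_bell_conv lam c n) =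
      (\<Sum>k\<le>n. smult (real (n choose k) * deg_fall lam c (n - k))
         (deg_bell lam (Suc k) + smult (c - real (n - k) * lam) (deg_bell lam k)))"
    unfolding deg_bell_conv_def euler_shift_sum euler_shift_smult euler_shift_deg_bell
    by (intro sum.cong refl) (simp add: of_nat_diff algebra_simps)
  also have "\<dots> = deg_bell_conv lam c (Suc n)"
    unfolding deg_bell_conv_def
    by (rule poly_eqI)
      (use deg_fall_binomial_convolution_Suc[where g = "\<lambda>k. coeff (deg_bell lam k) _"] in
        \<open>simp add: coeff_sum algebra_simps\<close>)
  finally show ?thesis .
qed

lemma deg_bell_add_eq_sum_deg_bell_conv:
  "deg_bell lam (n + m) =
     (\<Sum>j\<le>m. smult (deg_stirling2 lam m j) (monom 1 j * deg_bell_conv lam (real j - real m * lam) n))"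
proof (induction n)
  case 0
  show ?case by (simp add: deg_bell_conv_0 deg_bell_eq_sum_smult_monom)
next
  case (Suc n)
  have shift: "real j - real (n + m) * lam = (real j - real m * lam) - real n * lam" for j
    by (simp add: algebra_simps)
  have "deg_bell lam (Suc n + m) = euler_shift (- (real (n + m) * lam)) (deg_bell lam (n + m))"
    using deg_bell_Suc[of lam "n + m"] by simp
  also have "\<dots> = (\<Sum>j\<le>m. smult (deg_stirling2 lam m j)
      (monom 1 j * euler_shift (real j - real (n + m) * lam) (deg_bell_conv lam (real j - real m * lam) n)))"
    by (simp add: Suc euler_shift_sum euler_shift_smult euler_shift_monom_mult)
  finally show ?case
    by (simp only: shift euler_shift_deg_bell_conv)
qed

lemma sum_smult_mult_smult:
  "(\<Sum>k\<in>A. smult (a * h k) (p * q k)) = smult a (p * (\<Sum>k\<in>A. smult (h k) (q k)))"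
  by (induction A rule: infinite_finite_induct)
    (simp_all add: smult_add_right distrib_left mult_smult_right)

theorem theorem2p5:
  fixes lam :: real and m n :: nat
  assumes "lam \<noteq> 0"
  shows "deg_bell lam (n + m) =
    (\<Sum>j\<le>m. \<Sum>k\<le>n.
        smult (deg_stirling2 lam m j * real (n choose k)
                 * deg_fall lam (real j - real m * lam) (n - k))
              (monom 1 j * deg_bell lam k))"
  unfolding deg_bell_add_eq_sum_deg_bell_conv deg_bell_conv_def
  by (intro sum.cong refl) (simp add: sum_smult_mult_smult[symmetric] mult.assoc)

end
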